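(* Let $S=(G,P,\Lambda,I)$ be a completely simple semigroup with non-singular sandwich matrix $P$, and let $\mathbf{1}=(1,1_G,1)$. Then the equation $x=y$ is equivalent over $S$ (has the same solution set in $S^2$) to a system of the form $\{t_i(x,y)=\mathbf{1}\mid i\in\mathcal{I}\}$, where each $t_i$ is an $\mathcal{L}_S$-term.
   Context: Rees representation: a completely simple semigroup $S=(G,P,\Lambda,I)$ is given by a group $G$, index sets $\Lambda,I$ (each containing an element $1$), and a matrix $P=(p_{i\lambda})_{i\in I,\lambda\in\Lambda}$ over $G$ normalised so that $p_{1\lambda}=p_{i1}=1_G$; elements are triples $(\lambda,g,i)$ with product $(\lambda,g,i)(\mu,h,j)=(\lambda,gp_{i\mu}h,j)$ and inversion $(\lambda,g,i)^{-1}=(\lambda,p_{i\lambda}^{-1}g^{-1}p_{i\lambda}^{-1},i)$. $P$ is non-singular if it has no two equal rows and no two equal columns. The language $\mathcal{L}_S$ is $\{\cdot,{}^{-1}\}$ plus a constant for each element of $S$; terms are built from variables and constants using products and ${}^{-1}$. Two systems are equivalent over $S$ if they have the same solution set. *)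

theory Defs
  imports "HOL-Algebra.Group"
begin

text \<open>Rees matrix representation of a completely simple semigroup
  S = (G, P, Lambda, I). Elements are triples (lambda, g, i).\<close>

definition rees_data ::
  "('g, 'm) monoid_scheme \<Rightarrow> 'l set \<Rightarrow> 'i set \<Rightarrow> 'l \<Rightarrow> 'i \<Rightarrow> ('i \<Rightarrow> 'l \<Rightarrow> 'g) \<Rightarrow> bool" where
  "rees_data G Lam I oneL oneI P \<longleftrightarrow>
     group G \<and> oneL \<in> Lam \<and> oneI \<in> I \<and>
     (\<forall>i\<in>I. \<forall>l\<in>Lam. P i l \<in> carrier G) \<and>
     (\<forall>l\<in>Lam. P oneI l = \<one>\<^bsub>G\<^esub>) \<and>
     (\<forall>i\<in>I. P i oneL = \<one>\<^bsub>G\<^esub>)"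

definition nonsingular :: "'l set \<Rightarrow> 'i set \<Rightarrow> ('i \<Rightarrow> 'l \<Rightarrow> 'g) \<Rightarrow> bool" where
  "nonsingular Lam I P \<longleftrightarrow>
     (\<forall>i\<in>I. \<forall>j\<in>I. (\<forall>l\<in>Lam. P i l = P j l) \<longrightarrow> i = j) \<and>
     (\<forall>l\<in>Lam. \<forall>m\<in>Lam. (\<forall>i\<in>I. P i l = P i m) \<longrightarrow> l = m)"

definition rees_carrier :: "('g, 'm) monoid_scheme \<Rightarrow> 'l set \<Rightarrow> 'i set \<Rightarrow> ('l \<times> 'g \<times> 'i) set" where
  "rees_carrier G Lam I = Lam \<times> carrier G \<times> I"

fun rees_mult :: "('g, 'm) monoid_scheme \<Rightarrow> ('i \<Rightarrow> 'l \<Rightarrow> 'g) \<Rightarrow>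
    ('l \<times> 'g \<times> 'i) \<Rightarrow> ('l \<times> 'g \<times> 'i) \<Rightarrow> ('l \<times> 'g \<times> 'i)" where
  "rees_mult G P (l, g, i) (m, h, j) = (l, g \<otimes>\<^bsub>G\<^esub> P i m \<otimes>\<^bsub>G\<^esub> h, j)"

fun rees_inv :: "('g, 'm) monoid_scheme \<Rightarrow> ('i \<Rightarrow> 'l \<Rightarrow> 'g) \<Rightarrow>
    ('l \<times> 'g \<times> 'i) \<Rightarrow> ('l \<times> 'g \<times> 'i)" where
  "rees_inv G P (l, g, i) =
     (l, inv\<^bsub>G\<^esub> (P i l) \<otimes>\<^bsub>G\<^esub> inv\<^bsub>G\<^esub> g \<otimes>\<^bsub>G\<^esub> inv\<^bsub>G\<^esub> (P i l), i)"

datatype var = X | Y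

datatype ('v, 'c) sterm =
    Var 'v
  | Const 'c
  | Mul "('v, 'c) sterm" "('v, 'c) sterm"
  | Inv "('v, 'c) sterm"

fun term_consts :: "('v, 'c) sterm \<Rightarrow> 'c set" where
  "term_consts (Var v) = {}"
| "term_consts (Const c) = {c}"
| "term_consts (Mul s t) = term_consts s \<union> term_consts t"
| "term_consts (Inv t) = term_consts t"

fun rees_eval :: "('g, 'm) monoid_scheme \<Rightarrow> ('i \<Rightarrow> 'l \<Rightarrow> 'g) \<Rightarrow>
    ('v \<Rightarrow> 'l \<times> 'g \<times> 'i) \<Rightarrow> ('v, 'l \<times> 'g \<times> 'i) sterm \<Rightarrow> 'l \<times> 'g \<times> 'i" where
  "rees_eval G P \<sigma> (Var v) = \<sigma> v"
| "rees_eval G P \<sigma> (Const c) = c"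
| "rees_eval G P \<sigma> (Mul s t) = rees_mult G P (rees_eval G P \<sigma> s) (rees_eval G P \<sigma> t)"
| "rees_eval G P \<sigma> (Inv t) = rees_inv G P (rees_eval G P \<sigma> t)"

definition asg :: "'a \<Rightarrow> 'a \<Rightarrow> var \<Rightarrow> 'a" where
  "asg a b = (\<lambda>v. case v of X \<Rightarrow> a | Y \<Rightarrow> b)"

end

theory Submission
  imports Defs
begin

(* For k in I and n in Lambda, "sandwiching" an element
   (l, g, i) between the constants (1, 1_G, k) and (n, 1_G, 1) lands in the
   maximal subgroup at (1, 1) and yields (1, p_kl g p_in, 1).  This
   subgroup has identity 1 = (1, 1_G, 1), so for the term
     t_kn(x, y) = ((1,1_G,k) x (n,1_G,1)) ((1,1_G,k) y (n,1_G,1))^-1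
   the equation t_kn(a, b) = 1 says exactly that a and b have the same
   (k, n)-coordinate p_kl g p_in.  The coordinates determine the element:
   k = n = 1 recovers g (the matrix is normalised), k = 1 then recovers the
   row i and n = 1 the column l, and non-singularity turns equal rows and
   columns into equal indices. *)

definition sandwich_term ::
  "('g, 'm) monoid_scheme \<Rightarrow> 'l \<Rightarrow> 'i \<Rightarrow> 'i \<Rightarrow> 'l \<Rightarrow> 'v \<Rightarrow> ('v, 'l \<times> 'g \<times> 'i) sterm" where
  "sandwich_term G oneL oneI k n v =
     Mul (Mul (Const (oneL, \<one>\<^bsub>G\<^esub>, k)) (Var v)) (Const (n, \<one>\<^bsub>G\<^esub>, oneI))"

definition separating_term ::
  "('g, 'm) monoid_scheme \<Rightarrow> 'l \<Rightarrow> 'i \<Rightarrow> 'i \<Rightarrow> 'l \<Rightarrow> (var, 'l \<times> 'g \<times> 'i) sterm" where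
  "separating_term G oneL oneI k n =
     Mul (sandwich_term G oneL oneI k n X) (Inv (sandwich_term G oneL oneI k n Y))"

lemma rees_eval_sandwich_term:
  assumes "rees_data G Lam I oneL oneI P" and "\<sigma> v = (l, g, i)"
    and "k \<in> I" "n \<in> Lam" "l \<in> Lam" "g \<in> carrier G" "i \<in> I"
  shows "rees_eval G P \<sigma> (sandwich_term G oneL oneI k n v) =
           (oneL, P k l \<otimes>\<^bsub>G\<^esub> g \<otimes>\<^bsub>G\<^esub> P i n, oneI)"
proof -
  interpret group G using assms(1) by (simp add: rees_data_def)
  have "P k l \<in> carrier G" "P i n \<in> carrier G"
    using assms(1,3-7) by (auto simp: rees_data_def)
  then show ?thesis using assms(2,6) by (simp add: sandwich_term_def m_assoc)
qed

text \<open>The corner (1, _, 1) is a copy of G, because p_11 = 1_G; in particular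
  u w^-1 is computed there as in G.\<close>

lemma rees_corner_mult_inv:
  assumes "rees_data G Lam I oneL oneI P" and "u \<in> carrier G" "w \<in> carrier G"
  shows "rees_mult G P (oneL, u, oneI) (rees_inv G P (oneL, w, oneI)) =
           (oneL, u \<otimes>\<^bsub>G\<^esub> inv\<^bsub>G\<^esub> w, oneI)"
proof -
  interpret group G using assms(1) by (simp add: rees_data_def)
  have "P oneI oneL = \<one>\<^bsub>G\<^esub>" using assms(1) by (simp add: rees_data_def)
  then show ?thesis using assms(2,3) by simp
qed

lemma rees_eval_separating_term:
  assumes "rees_data G Lam I oneL oneI P" and "k \<in> I" "n \<in> Lam"
    and "(l, g, i) \<in> rees_carrier G Lam I" "(m, h, j) \<in> rees_carrier G Lam I"
  shows "rees_eval G P (asg (l, g, i) (m, h, j)) (separating_term G oneL oneI k n) =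
           (oneL, \<one>\<^bsub>G\<^esub>, oneI) \<longleftrightarrow>
         P k l \<otimes>\<^bsub>G\<^esub> g \<otimes>\<^bsub>G\<^esub> P i n = P k m \<otimes>\<^bsub>G\<^esub> h \<otimes>\<^bsub>G\<^esub> P j n"
proof -
  interpret group G using assms(1) by (simp add: rees_data_def)
  let ?u = "P k l \<otimes>\<^bsub>G\<^esub> g \<otimes>\<^bsub>G\<^esub> P i n" and ?w = "P k m \<otimes>\<^bsub>G\<^esub> h \<otimes>\<^bsub>G\<^esub> P j n"
  have mem: "l \<in> Lam" "g \<in> carrier G" "i \<in> I" "m \<in> Lam" "h \<in> carrier G" "j \<in> I"
    using assms(4,5) by (auto simp: rees_carrier_def)
  have uw: "?u \<in> carrier G" "?w \<in> carrier G"
    using assms(1-3) mem by (auto simp: rees_data_def)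
  have "rees_eval G P (asg (l, g, i) (m, h, j)) (separating_term G oneL oneI k n) =
          (oneL, ?u \<otimes>\<^bsub>G\<^esub> inv\<^bsub>G\<^esub> ?w, oneI)"
  proof -
    let ?\<sigma> = "asg (l, g, i) (m, h, j)"
    have "rees_eval G P ?\<sigma> (sandwich_term G oneL oneI k n X) = (oneL, ?u, oneI)"
      by (rule rees_eval_sandwich_term[OF assms(1) _ assms(2,3)]) (use mem in \<open>simp_all add: asg_def\<close>)
    moreover have "rees_eval G P ?\<sigma> (sandwich_term G oneL oneI k n Y) = (oneL, ?w, oneI)"
      by (rule rees_eval_sandwich_term[OF assms(1) _ assms(2,3)]) (use mem in \<open>simp_all add: asg_def\<close>)
    ultimately show ?thesis
      using rees_corner_mult_inv[OF assms(1) uw] by (simp add: separating_term_def)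
  qed
  moreover have "?u \<otimes>\<^bsub>G\<^esub> inv\<^bsub>G\<^esub> ?w = \<one>\<^bsub>G\<^esub> \<longleftrightarrow> ?u = ?w"
    using uw by (metis inv_equality inv_inv inv_closed r_inv)
  ultimately show ?thesis by simp
qed

text \<open>The coordinates (p_kl g p_in) for k in I, n in Lambda determine the element
  (l, g, i): the coordinate at (1, 1) is g, those at (1, n) give row i of P,
  those at (k, 1) give column l, and non-singularity identifies i and l.\<close>

lemma rees_coordinates_determine_element:
  assumes data: "rees_data G Lam I oneL oneI P" and ns: "nonsingular Lam I P"
    and a: "(l, g, i) \<in> rees_carrier G Lam I" and b: "(m, h, j) \<in> rees_carrier G Lam I"
    and coord: "\<And>k n. k \<in> I \<Longrightarrow> n \<in> Lam \<Longrightarrow>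
                  P k l \<otimes>\<^bsub>G\<^esub> g \<otimes>\<^bsub>G\<^esub> P i n = P k m \<otimes>\<^bsub>G\<^esub> h \<otimes>\<^bsub>G\<^esub> P j n"
  shows "(l, g, i) = (m, h, j)"
proof -
  interpret group G using data by (simp add: rees_data_def)
  have oL: "oneL \<in> Lam" and oI: "oneI \<in> I"
    and Pc: "\<And>k n. k \<in> I \<Longrightarrow> n \<in> Lam \<Longrightarrow> P k n \<in> carrier G"
    and row1: "\<And>n. n \<in> Lam \<Longrightarrow> P oneI n = \<one>\<^bsub>G\<^esub>"
    and col1: "\<And>k. k \<in> I \<Longrightarrow> P k oneL = \<one>\<^bsub>G\<^esub>"
    using data by (auto simp: rees_data_def)
  have mem: "l \<in> Lam" "g \<in> carrier G" "i \<in> I" "m \<in> Lam" "h \<in> carrier G" "j \<in> I"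
    using a b by (auto simp: rees_carrier_def)
  have gh: "g = h" using coord[OF oI oL] row1 col1 mem by simp
  have "P i n = P j n" if n: "n \<in> Lam" for n
  proof -
    have "g \<otimes>\<^bsub>G\<^esub> P i n = g \<otimes>\<^bsub>G\<^esub> P j n" using coord[OF oI n] row1 mem gh by simp
    then show ?thesis using mem n Pc by simp
  qed
  then have ij: "i = j" using ns mem by (auto simp: nonsingular_def)
  have "P k l = P k m" if k: "k \<in> I" for k
  proof -
    have "P k l \<otimes>\<^bsub>G\<^esub> g = P k m \<otimes>\<^bsub>G\<^esub> g" using coord[OF k oL] col1 mem gh Pc k by simp
    then show ?thesis using mem k Pc by simp
  qed
  then have "l = m" using ns mem by (auto simp: nonsingular_def)
  with gh ij show ?thesis by simp
qed

theorem mainTheorem4: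
  fixes G :: "('g, 'm) monoid_scheme" and Lam :: "'l set" and I :: "'i set"
    and oneL :: 'l and oneI :: 'i and P :: "'i \<Rightarrow> 'l \<Rightarrow> 'g"
  assumes "rees_data G Lam I oneL oneI P"
    and "nonsingular Lam I P"
  shows "\<exists>T :: (var, 'l \<times> 'g \<times> 'i) sterm set.
           (\<forall>t\<in>T. term_consts t \<subseteq> rees_carrier G Lam I) \<and>
           (\<forall>a\<in>rees_carrier G Lam I. \<forall>b\<in>rees_carrier G Lam I.
              a = b \<longleftrightarrow> (\<forall>t\<in>T. rees_eval G P (asg a b) t = (oneL, \<one>\<^bsub>G\<^esub>, oneI)))"
proof (intro exI[of _ "(\<lambda>(k, n). separating_term G oneL oneI k n) ` (I \<times> Lam)"] conjI ballI)
  fix t assume "t \<in> (\<lambda>(k, n). separating_term G oneL oneI k n) ` (I \<times> Lam)"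
  then show "term_consts t \<subseteq> rees_carrier G Lam I"
    using assms(1) monoid.one_closed[OF group.is_monoid]
    by (auto simp: separating_term_def sandwich_term_def rees_carrier_def rees_data_def)
next
  fix a b assume a: "a \<in> rees_carrier G Lam I" and b: "b \<in> rees_carrier G Lam I"
  obtain l g i m h j where ab: "a = (l, g, i)" "b = (m, h, j)" by (cases a, cases b) auto
  have "(\<forall>t\<in>(\<lambda>(k, n). separating_term G oneL oneI k n) ` (I \<times> Lam).
          rees_eval G P (asg a b) t = (oneL, \<one>\<^bsub>G\<^esub>, oneI)) \<longleftrightarrow>
        (\<forall>k\<in>I. \<forall>n\<in>Lam. P k l \<otimes>\<^bsub>G\<^esub> g \<otimes>\<^bsub>G\<^esub> P i n = P k m \<otimes>\<^bsub>G\<^esub> h \<otimes>\<^bsub>G\<^esub> P j n)"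
    using rees_eval_separating_term[OF assms(1)] a b ab by auto
  moreover have "a = b \<longleftrightarrow>
        (\<forall>k\<in>I. \<forall>n\<in>Lam. P k l \<otimes>\<^bsub>G\<^esub> g \<otimes>\<^bsub>G\<^esub> P i n = P k m \<otimes>\<^bsub>G\<^esub> h \<otimes>\<^bsub>G\<^esub> P j n)"
    using rees_coordinates_determine_element[OF assms] a b ab by auto
  ultimately show "a = b \<longleftrightarrow> (\<forall>t\<in>(\<lambda>(k, n). separating_term G oneL oneI k n) ` (I \<times> Lam).
                     rees_eval G P (asg a b) t = (oneL, \<one>\<^bsub>G\<^esub>, oneI))"
    by simp
qed

end
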